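(* Under the standing setup, assume that $f$ is bounded, i.e. $\sup_{q\in\mathcal P}\|f_q\|_\infty<\infty$. Then there exists a constant $L>0$ such that $\|\mathscr S(t)u_0-u_0\|_\infty\le Lt\|u_0\|_\infty$ for all $t\ge0$ and $u_0\in\mathbb R^d$.
   Context: Standing setup: $d\in\mathbb N$; vectors in $\mathbb R^d$ with $\|u\|_\infty=\max_i|u_i|$; inequalities and suprema of vectors are componentwise; reals are identified with constant vectors. A $Q$-matrix is $q\in\mathbb R^{d\times d}$ with $q_{ii}\le0$, $q_{ij}\ge0$ ($i\ne j$), $\sum_jq_{ij}=0$. Let $\mathcal P$ be a set of $Q$-matrices and $f=(f_q)_{q\in\mathcal P}\subset\mathbb R^d$ with $\sup_{q\in\mathcal P}f_q=f_{q_0}=0$ for some $q_0\in\mathcal P$, such that $\mathcal Qu:=\sup_{q\in\mathcal P}(qu+f_q)$ is finite for every $u\in\mathbb R^d$. For $q\in\mathcal P$, $t\ge0$: $S_q(t)u_0:=e^{tq}u_0+\int_0^te^{sq}f_q\,ds$. For $h\ge0$: $\mathcal E_hu_0:=\sup_{q\in\mathcal P}S_q(h)u_0$. $P$ is the set of finite subsets $\pi\subset[0,\infty)$ with $0\in\pi$; $P_t:=\{\pi\in P:\max\pi=t\}$. For $\pi=\{t_0,\dots,t_m\}$ with $0=t_0<\dots<t_m$, $m\ge1$, $\mathcal E_\pi:=\mathcal E_{t_1-t_0}\circ\cdots\circ\mathcal E_{t_m-t_{m-1}}$, and $\mathcal E_{\{0\}}:=\mathcal E_0$. The Nisio semigroup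 of $(\mathcal P,f)$ is $\mathscr S(t)u_0:=\sup_{\pi\in P_t}\mathcal E_\pi u_0$. *)

theory Defs
  imports "HOL-Analysis.Analysis"
begin

definition supnorm :: "real^'d \<Rightarrow> real" where
  "supnorm u = Max (range (\<lambda>i. \<bar>u $ i\<bar>))"

definition is_Qmatrix :: "real^'d^'d \<Rightarrow> bool" where
  "is_Qmatrix q \<longleftrightarrow> (\<forall>i. q $ i $ i \<le> 0) \<and> (\<forall>i j. i \<noteq> j \<longrightarrow> q $ i $ j \<ge> 0)
      \<and> (\<forall>i. (\<Sum>j\<in>UNIV. q $ i $ j) = 0)"

primrec matpow :: "real^'d^'d \<Rightarrow> nat \<Rightarrow> real^'d^'d" where
  "matpow q 0 = mat 1"
| "matpow q (Suc n) = q ** matpow q n"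

definition mexp :: "real \<Rightarrow> real^'d^'d \<Rightarrow> real^'d^'d" where
  "mexp t q = (\<Sum>n. (t ^ n / fact n) *\<^sub>R matpow q n)"

definition Sq :: "(real^'d^'d \<Rightarrow> real^'d) \<Rightarrow> real^'d^'d \<Rightarrow> real \<Rightarrow> real^'d \<Rightarrow> real^'d" where
  "Sq f q t u0 = mexp t q *v u0 + integral {0..t} (\<lambda>s. mexp s q *v f q)"

definition Eh :: "(real^'d^'d) set \<Rightarrow> (real^'d^'d \<Rightarrow> real^'d) \<Rightarrow> real \<Rightarrow> real^'d \<Rightarrow> real^'d" where
  "Eh P f h u0 = (\<chi> i. SUP q\<in>P. Sq f q h u0 $ i)"

fun Elist :: "(real^'d^'d) set \<Rightarrow> (real^'d^'d \<Rightarrow> real^'d) \<Rightarrow> real list \<Rightarrow> real^'d \<Rightarrow> real^'d" where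
  "Elist P f (a # b # rest) u = Eh P f (b - a) (Elist P f (b # rest) u)"
| "Elist P f _ u = u"

definition Epi :: "(real^'d^'d) set \<Rightarrow> (real^'d^'d \<Rightarrow> real^'d) \<Rightarrow> real set \<Rightarrow> real^'d \<Rightarrow> real^'d" where
  "Epi P f \<pi> u = (if \<pi> = {0} then Eh P f 0 u else Elist P f (sorted_list_of_set \<pi>) u)"

definition partitions :: "real \<Rightarrow> real set set" where
  "partitions t = {\<pi>. finite \<pi> \<and> \<pi> \<subseteq> {0..} \<and> 0 \<in> \<pi> \<and> Max \<pi> = t}"

definition Nisio :: "(real^'d^'d) set \<Rightarrow> (real^'d^'d \<Rightarrow> real^'d) \<Rightarrow> real \<Rightarrow> real^'d \<Rightarrow> real^'d" where
  "Nisio P f t u0 = (\<chi> i. SUP \<pi>\<in>partitions t. Epi P f \<pi> u0 $ i)"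

end

theory Submission
  imports Defs
begin

text \<open>For a Q-matrix q and h \<ge> 0 the matrix e^{hq} is stochastic, and its distance to the identity
is O(h) uniformly over any family of Q-matrices with bounded entries; such a bound follows from
the finiteness of the generator together with the boundedness of f. Since f_q \<le> 0 = f_{q0},
S_q(h) v \<le> e^{hq} v with equality for q0, whence \<parallel>E_h v - w\<parallel> \<le> K h \<parallel>w\<parallel> + \<parallel>v - w\<parallel>.
Telescoping along a partition of [0,t] bounds every E_\<pi> u0 - u0, hence the Nisio semigroup,
by K t \<parallel>u0\<parallel>.\<close>

lemma abs_le_supnorm: "\<bar>u $ i\<bar> \<le> supnorm (u::real^'n)"
  unfolding supnorm_def by (rule Max_ge) auto

lemma supnorm_nonneg: "0 \<le> supnorm (u::real^'n)"
  using order_trans[OF abs_ge_zero abs_le_supnorm] .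

lemma supnorm_leI: "(\<And>i. \<bar>u $ i\<bar> \<le> c) \<Longrightarrow> supnorm (u::real^'n) \<le> c"
  unfolding supnorm_def by (subst Max_le_iff) auto

subsection \<open>The matrix exponential\<close>

lemma matpow_entry_abs_le:
  fixes q :: "real^'n^'n"
  assumes C: "\<And>i j. \<bar>q$i$j\<bar> \<le> C"
  shows "\<bar>matpow q n $ i $ j\<bar> \<le> (real CARD('n) * C)^n"
proof (induction n arbitrary: i j)
  case 0
  then show ?case by (simp add: mat_def)
next
  case (Suc n)
  have "\<bar>matpow q (Suc n) $ i $ j\<bar> = \<bar>\<Sum>k\<in>UNIV. q$i$k * matpow q n $k$j\<bar>"
    by (simp add: matrix_matrix_mult_def)
  also have "\<dots> \<le> (\<Sum>k\<in>UNIV. \<bar>q$i$k\<bar> * \<bar>matpow q n $k$j\<bar>)"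
    unfolding abs_mult[symmetric] by (rule sum_abs)
  also have "\<dots> \<le> (\<Sum>k\<in>(UNIV::'n set). C * (real CARD('n) * C)^n)"
    by (intro sum_mono mult_mono C Suc.IH) (auto intro: order_trans[OF abs_ge_zero C])
  also have "\<dots> = (real CARD('n) * C)^Suc n" by simp
  finally show ?case .
qed

lemma summable_mexp_series:
  fixes q :: "real^'n^'n"
  shows "summable (\<lambda>n. (t ^ n / fact n) *\<^sub>R matpow q n)"
proof -
  define C where "C = (\<Sum>i\<in>UNIV. \<Sum>j\<in>UNIV. \<bar>q$i$j\<bar>)"
  have C: "\<bar>q$i$j\<bar> \<le> C" for i j
    unfolding C_def using member_le_sum[of i UNIV "\<lambda>i. \<Sum>j\<in>UNIV. \<bar>q$i$j\<bar>"]
      member_le_sum[of j UNIV "\<lambda>j. \<bar>q$i$j\<bar>"] by (force intro: sum_nonneg)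
  let ?N = "real CARD('n)" and ?D = "real CARD('n) * C"
  have norm_matpow: "norm (matpow q n) \<le> ?N * ?N * ?D^n" for n
  proof -
    have "norm (matpow q n) \<le> (\<Sum>i\<in>UNIV. norm (matpow q n $ i))"
      unfolding norm_vec_def by (rule L2_set_le_sum) auto
    also have "\<dots> \<le> (\<Sum>i\<in>(UNIV::'n set). \<Sum>j\<in>(UNIV::'n set). ?D^n)"
      by (intro sum_mono order_trans[OF norm_le_l1_cart] matpow_entry_abs_le C)
    finally show ?thesis by simp
  qed
  have "summable (\<lambda>n. ?N * ?N * (inverse (fact n) * (\<bar>t\<bar> * ?D)^n))"
    by (intro summable_mult summable_exp)
  then show ?thesis
  proof (rule summable_comparison_test'[where N=0])
    fix n :: nat
    have "norm ((t ^ n / fact n) *\<^sub>R matpow q n) = (\<bar>t\<bar>^n / fact n) * norm (matpow q n)"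
      by (simp add: power_abs)
    also have "\<dots> \<le> (\<bar>t\<bar>^n / fact n) * (?N * ?N * ?D^n)"
      by (rule mult_left_mono[OF norm_matpow]) auto
    also have "\<dots> = ?N * ?N * (inverse (fact n) * (\<bar>t\<bar> * ?D)^n)"
      by (simp add: field_simps)
    finally show "norm ((t ^ n / fact n) *\<^sub>R matpow q n) \<le> \<dots>" .
  qed
qed

lemma mexp_entry_sums:
  fixes q :: "real^'n^'n"
  shows "(\<lambda>n. t ^ n / fact n * matpow q n $ i $ j) sums (mexp t q $ i $ j)"
  using sums_vec_nth[OF sums_vec_nth[OF summable_sums[OF summable_mexp_series[of t q]]], of i j]
  by (simp add: mexp_def)

lemma matpow_row_sum:
  fixes q :: "real^'n^'n"
  assumes "is_Qmatrix q"
  shows "(\<Sum>j\<in>UNIV. matpow q n $ i $ j) = (if n = 0 then 1 else 0)"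
proof (induction n arbitrary: i)
  case 0
  then show ?case by (simp add: mat_def)
next
  case (Suc n)
  have "(\<Sum>j\<in>UNIV. matpow q (Suc n) $ i $ j) = (\<Sum>k\<in>UNIV. q$i$k * (\<Sum>j\<in>UNIV. matpow q n $k$j))"
    by (simp add: matrix_matrix_mult_def sum_distrib_left) (rule sum.swap)
  also have "\<dots> = (\<Sum>k\<in>UNIV. q$i$k) * (if n = 0 then 1 else 0)"
    by (simp add: Suc.IH sum_distrib_right)
  also have "\<dots> = 0" using assms by (simp add: is_Qmatrix_def)
  finally show ?case by simp
qed

lemma mexp_row_sum:
  fixes q :: "real^'n^'n"
  assumes "is_Qmatrix q"
  shows "(\<Sum>j\<in>UNIV. mexp t q $ i $ j) = 1"
proof -
  have "(\<lambda>n. \<Sum>j\<in>UNIV. t ^ n / fact n * matpow q n $ i $ j) sums (\<Sum>j\<in>UNIV. mexp t q $ i $ j)"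
    by (rule sums_sum) (rule mexp_entry_sums)
  moreover have "(\<lambda>n. \<Sum>j\<in>UNIV. t ^ n / fact n * matpow q n $ i $ j) = (\<lambda>n. if n = 0 then 1 else 0)"
    by (simp only: sum_distrib_left[symmetric]) (auto simp: matpow_row_sum[OF assms])
  ultimately show ?thesis using sums_single[of 0 "\<lambda>_. 1::real"] sums_unique2 by fastforce
qed

lemma matrix_mult_scaleR_sum_right:
  fixes A :: "real^'n^'n"
  shows "A ** (\<Sum>k\<in>K. c k *\<^sub>R B k) = (\<Sum>k\<in>K. c k *\<^sub>R (A ** B k))"
  by (simp add: vec_eq_iff matrix_matrix_mult_def sum_distrib_left
      sum_distrib_right mult_ac) (subst sum.swap, simp)

lemma binomial_sum_scaleR_Suc:
  fixes M :: "nat \<Rightarrow> 'a::real_vector" and a :: real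
  shows "(\<Sum>k\<le>n. (of_nat (n choose k) * a^(n-k)) *\<^sub>R M (Suc k))
       + a *\<^sub>R (\<Sum>k\<le>n. (of_nat (n choose k) * a^(n-k)) *\<^sub>R M k)
       = (\<Sum>k\<le>Suc n. (of_nat (Suc n choose k) * a^(Suc n-k)) *\<^sub>R M k)"
proof -
  have "a *\<^sub>R (\<Sum>k\<le>n. (of_nat (n choose k) * a^(n-k)) *\<^sub>R M k)
      = (\<Sum>k\<le>n. (of_nat (n choose k) * a^(Suc n-k)) *\<^sub>R M k)"
    by (auto simp: scaleR_sum_right Suc_diff_le intro!: sum.cong)
  also have "\<dots> = (\<Sum>k\<le>Suc n. (of_nat (n choose k) * a^(Suc n-k)) *\<^sub>R M k)"
    by simp
  also have "\<dots> = a^(Suc n) *\<^sub>R M 0 + (\<Sum>k\<le>n. (of_nat (n choose Suc k) * a^(n-k)) *\<^sub>R M (Suc k))"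
    by (subst sum.atMost_Suc_shift) simp
  moreover have "(\<Sum>k\<le>Suc n. (of_nat (Suc n choose k) * a^(Suc n-k)) *\<^sub>R M k)
     = a^(Suc n) *\<^sub>R M 0 + (\<Sum>k\<le>n. (of_nat (n choose k) * a^(n-k)) *\<^sub>R M (Suc k))
        + (\<Sum>k\<le>n. (of_nat (n choose Suc k) * a^(n-k)) *\<^sub>R M (Suc k))"
    by (subst sum.atMost_Suc_shift) (simp add: algebra_simps sum.distrib)
  ultimately show ?thesis by (simp add: algebra_simps)
qed

lemma matpow_add_scaleR_id:
  fixes N :: "real^'n^'n"
  shows "matpow (N + a *\<^sub>R mat 1) n = (\<Sum>k\<le>n. (of_nat (n choose k) * a^(n-k)) *\<^sub>R matpow N k)"
proof (induction n)
  case 0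
  then show ?case by simp
next
  case (Suc n)
  have distrib: "(N + a *\<^sub>R mat 1) ** X = N ** X + a *\<^sub>R X" for X :: "real^'n^'n"
  proof -
    have "(N + a *\<^sub>R mat 1) ** X = N ** X + (a *\<^sub>R mat 1) ** X"
      by (simp add: vec_eq_iff matrix_matrix_mult_def sum.distrib distrib_right)
    then show ?thesis by (simp add: scalar_matrix_assoc[symmetric])
  qed
  have "matpow (N + a *\<^sub>R mat 1) (Suc n)
      = N ** (\<Sum>k\<le>n. (of_nat (n choose k) * a^(n-k)) *\<^sub>R matpow N k)
        + a *\<^sub>R (\<Sum>k\<le>n. (of_nat (n choose k) * a^(n-k)) *\<^sub>R matpow N k)"
    by (simp only: matpow.simps distrib Suc.IH)
  then show ?case
    by (simp only: matrix_mult_scaleR_sum_right flip: matpow.simps binomial_sum_scaleR_Suc)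
qed

text \<open>Nonnegativity comes from writing q = N - c I with N \<ge> 0 entrywise, so that the series of
e^{sq} is the Cauchy product of those of e^{sN} \<ge> 0 and e^{-cs}.\<close>

lemma mexp_entry_nonneg:
  fixes q :: "real^'n^'n"
  assumes Q: "is_Qmatrix q" and s: "s \<ge> 0"
  shows "mexp s q $ i $ j \<ge> 0"
proof -
  define c where "c = (\<Sum>i\<in>UNIV. \<bar>q$i$i\<bar>)"
  define N where "N = q + c *\<^sub>R mat 1"
  have qN: "q = N + (- c) *\<^sub>R mat 1" unfolding N_def by simp
  have N_nonneg: "N $ i $ j \<ge> 0" for i j
    using Q member_le_sum[of i UNIV "\<lambda>i. \<bar>q$i$i\<bar>"]
    unfolding N_def c_def is_Qmatrix_def by (auto simp: mat_def)
  have matpow_N_nonneg: "matpow N k $ i $ j \<ge> 0" for k i j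
    by (induction k arbitrary: i j) (simp_all add: mat_def matrix_matrix_mult_def sum_nonneg N_nonneg)
  define A where "A k = s^k / fact k * matpow N k $ i $ j" for k
  define B where "B m = (- c * s)^m / fact m" for m
  have A_nonneg: "A k \<ge> 0" for k unfolding A_def using s matpow_N_nonneg by simp
  have A_sums: "A sums mexp s N $ i $ j" unfolding A_def by (rule mexp_entry_sums)
  have B_sums: "B sums exp (- c * s)"
    unfolding B_def using exp_converges[of "- c * s"] by (simp add: divide_inverse mult.commute)
  have "summable (\<lambda>k. norm (A k))" using A_sums A_nonneg by (simp add: sums_summable)
  moreover have "summable (\<lambda>k. norm (B k))"
    using summable_exp[of "\<bar>- c * s\<bar>"] unfolding B_def
    by (simp add: abs_mult power_abs divide_inverse mult.commute)
  ultimately have "(\<lambda>n. \<Sum>k\<le>n. A k * B (n - k)) sums (suminf A * suminf B)"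
    by (rule Cauchy_product_sums)
  moreover have "s ^ n / fact n * matpow q n $ i $ j = (\<Sum>k\<le>n. A k * B (n - k))" for n
  proof -
    have "matpow q n $ i $ j = (\<Sum>k\<le>n. (of_nat (n choose k) * (- c)^(n-k)) * matpow N k $ i $ j)"
      unfolding qN matpow_add_scaleR_id by simp
    then have "s ^ n / fact n * matpow q n $ i $ j
       = (\<Sum>k\<le>n. s ^ n / fact n * (of_nat (n choose k) * (- c)^(n-k)) * matpow N k $ i $ j)"
      by (simp add: sum_distrib_left mult.assoc)
    also have "\<dots> = (\<Sum>k\<le>n. A k * B (n - k))"
    proof (rule sum.cong[OF refl])
      fix k assume "k \<in> {..n}"
      then have kn: "k \<le> n" by simp
      have "s^n = s^k * s^(n-k)" using kn by (simp add: power_add[symmetric])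
      moreover have "real (n choose k) = fact n / (fact k * fact (n - k))" using kn by (rule binomial_fact)
      moreover have "(- c * s)^(n-k) = (- c)^(n-k) * s^(n-k)" by (rule power_mult_distrib)
      ultimately show "s ^ n / fact n * (of_nat (n choose k) * (- c)^(n-k)) * matpow N k $ i $ j
          = A k * B (n - k)"
        unfolding A_def B_def by (simp add: field_simps)
    qed
    finally show ?thesis .
  qed
  ultimately have "mexp s q $ i $ j = suminf A * suminf B"
    using mexp_entry_sums sums_unique2 by (metis (no_types, lifting) ext)
  also have "\<dots> \<ge> 0"
  proof (rule mult_nonneg_nonneg)
    show "suminf A \<ge> 0" using A_sums A_nonneg by (intro suminf_nonneg) (auto simp: sums_iff)
    show "suminf B \<ge> 0" using B_sums by (simp add: sums_iff)
  qed
  finally show ?thesis .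
qed

lemma mexp_entry_near_mat_1:
  fixes q :: "real^'n^'n"
  assumes C: "\<And>i j. \<bar>q$i$j\<bar> \<le> C" and h: "0 \<le> h" "h \<le> 1"
  shows "\<bar>mexp h q $ i $ j - mat 1 $ i $ j\<bar> \<le> h * exp (real CARD('n) * C)"
proof -
  let ?D = "real CARD('n) * C"
  define g where "g n = h ^ n / fact n * matpow q n $ i $ j - (if n = 0 then mat 1 $ i $ j else 0)" for n
  have g_sums: "g sums (mexp h q $ i $ j - mat 1 $ i $ j)"
    unfolding g_def by (rule sums_diff[OF mexp_entry_sums sums_single])
  have g_bound: "norm (g n) \<le> h * (?D ^ n / fact n)" for n
  proof (cases n)
    case 0 then show ?thesis using h by (simp add: g_def)
  next
    case (Suc m)
    have "norm (g n) = h ^ n / fact n * \<bar>matpow q n $ i $ j\<bar>"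
      using h by (simp add: g_def Suc abs_mult)
    also have "\<dots> \<le> h / fact n * ?D ^ n"
    proof (rule mult_mono)
      have "h ^ n \<le> h ^ 1" using h Suc by (intro power_decreasing) auto
      then show "h ^ n / fact n \<le> h / fact n" by (simp add: divide_right_mono)
    qed (use matpow_entry_abs_le[OF C] h in auto)
    finally show ?thesis by simp
  qed
  have exp_sums: "(\<lambda>n. h * (?D ^ n / fact n)) sums (h * exp ?D)"
    using sums_mult[OF exp_converges[of ?D], of h] by (simp add: divide_inverse mult.commute)
  have "norm (suminf g) \<le> (\<Sum>n. h * (?D ^ n / fact n))"
    by (rule norm_suminf_le[OF g_bound]) (use exp_sums in \<open>simp add: sums_iff\<close>)
  then show ?thesis using g_sums exp_sums by (simp add: sums_iff)
qed

subsection \<open>Stochastic matrices\<close>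

definition stochastic_matrix :: "real^'n^'m \<Rightarrow> bool" where
  "stochastic_matrix M \<longleftrightarrow> (\<forall>i j. M $ i $ j \<ge> 0) \<and> (\<forall>i. (\<Sum>j\<in>UNIV. M $ i $ j) = 1)"

lemma stochastic_mexp:
  fixes q :: "real^'n^'n"
  assumes "is_Qmatrix q" and "h \<ge> 0"
  shows "stochastic_matrix (mexp h q)"
  using assms mexp_entry_nonneg mexp_row_sum unfolding stochastic_matrix_def by blast

lemma stochastic_mult_dist:
  fixes M :: "real^'n^'m"
  assumes M: "stochastic_matrix M" and vw: "\<And>j. \<bar>v $ j - w $ j\<bar> \<le> c"
  shows "\<bar>(M *v v) $ i - (M *v w) $ i\<bar> \<le> c"
proof -
  have "(M *v v) $ i - (M *v w) $ i = (\<Sum>j\<in>UNIV. M $ i $ j * (v $ j - w $ j))"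
    by (simp add: matrix_vector_mult_def right_diff_distrib sum_subtractf)
  also have "\<bar>\<dots>\<bar> \<le> (\<Sum>j\<in>UNIV. M $ i $ j * c)"
    using M by (intro order_trans[OF sum_abs] sum_mono)
      (simp add: abs_mult stochastic_matrix_def mult_left_mono vw)
  also have "\<dots> = c"
    using M by (simp add: sum_distrib_right[symmetric] stochastic_matrix_def)
  finally show ?thesis .
qed

lemma stochastic_mult_abs_le_supnorm:
  fixes M :: "real^'n^'m"
  assumes "stochastic_matrix M"
  shows "\<bar>(M *v v) $ i\<bar> \<le> supnorm v"
  using stochastic_mult_dist[OF assms, of v 0 "supnorm v" i] abs_le_supnorm[of v] by simp

lemma mexp_mult_near:
  fixes q :: "real^'n^'n"
  assumes Q: "is_Qmatrix q" and C: "\<And>i j. \<bar>q$i$j\<bar> \<le> C" and h: "0 \<le> h"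
  shows "\<bar>(mexp h q *v u) $ i - u $ i\<bar>
      \<le> max 2 (real CARD('n) * exp (real CARD('n) * C)) * h * supnorm u"
proof (cases "h \<le> 1")
  case True
  have "u $ i = (\<Sum>j\<in>UNIV. mat 1 $ i $ j * u $ j)"
    using matrix_vector_mul_lid[of u] by (simp add: matrix_vector_mult_def vec_eq_iff)
  then have "(mexp h q *v u) $ i - u $ i = (\<Sum>j\<in>UNIV. (mexp h q $ i $ j - mat 1 $ i $ j) * u $ j)"
    by (simp add: matrix_vector_mult_def left_diff_distrib sum_subtractf)
  also have "\<bar>\<dots>\<bar> \<le> (\<Sum>j\<in>(UNIV::'n set). h * exp (real CARD('n) * C) * supnorm u)"
    by (intro order_trans[OF sum_abs] sum_mono)
      (simp add: abs_mult mult_mono mexp_entry_near_mat_1[OF C h True] abs_le_supnorm h)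
  also have "\<dots> = (real CARD('n) * exp (real CARD('n) * C)) * (h * supnorm u)" by simp
  also have "\<dots> \<le> max 2 (real CARD('n) * exp (real CARD('n) * C)) * (h * supnorm u)"
    using h supnorm_nonneg[of u] by (intro mult_right_mono) auto
  finally show ?thesis by (simp add: mult.assoc)
next
  case False
  have "\<bar>(mexp h q *v u) $ i - u $ i\<bar> \<le> 2 * supnorm u"
    using stochastic_mult_abs_le_supnorm[OF stochastic_mexp[OF Q h], of u i]
      abs_le_supnorm[of u i] by linarith
  also have "\<dots> \<le> max 2 (real CARD('n) * exp (real CARD('n) * C)) * h * supnorm u"
  proof (intro mult_right_mono supnorm_nonneg)
    show "2 \<le> max 2 (real CARD('n) * exp (real CARD('n) * C)) * h"
      using False by (smt (verit) max.cobounded1 mult_le_cancel_left1)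
  qed
  finally show ?thesis .
qed

subsection \<open>The one-step and the Nisio operators\<close>

lemma integral_mexp_mult_nonpos:
  fixes q :: "real^'n^'n"
  assumes Q: "is_Qmatrix q" and v: "\<And>j. v $ j \<le> 0"
  shows "integral {0..h} (\<lambda>s. mexp s q *v v) $ i \<le> 0"
proof (cases "(\<lambda>s. mexp s q *v v) integrable_on {0..h}")
  case True
  have "integral {0..h} (\<lambda>s. mexp s q *v v) \<bullet> axis i 1 \<le> 0"
  proof (rule has_integral_component_neg[OF _ integrable_integral[OF True]])
    fix s :: real assume "s \<in> {0..h}"
    then have "(mexp s q *v v) $ i \<le> 0"
      by (simp add: matrix_vector_mult_def sum_nonpos mult_nonneg_nonpos mexp_entry_nonneg[OF Q] v)
    then show "(mexp s q *v v) \<bullet> axis i 1 \<le> 0" by (simp add: cart_eq_inner_axis[symmetric])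
  qed simp
  then show ?thesis by (simp add: cart_eq_inner_axis)
qed (simp add: not_integrable_integral)

lemma Sq_le_mexp_mult:
  assumes "is_Qmatrix q" and "\<And>j. f q $ j \<le> 0"
  shows "Sq f q h v $ i \<le> (mexp h q *v v) $ i"
  using integral_mexp_mult_nonpos[OF assms, of h i] by (simp add: Sq_def)

context
  fixes P :: "(real^'n^'n) set" and f :: "real^'n^'n \<Rightarrow> real^'n" and q0 :: "real^'n^'n"
    and K :: real
  assumes Qmatrices: "\<forall>q\<in>P. is_Qmatrix q"
    and q0: "q0 \<in> P"
    and f_nonpos: "\<forall>q\<in>P. \<forall>i. f q $ i \<le> 0"
    and f_q0: "f q0 = 0"
    and K_nonneg: "0 \<le> K"
    and mexp_near: "\<forall>q\<in>P. \<forall>h\<ge>0. \<forall>u i. \<bar>(mexp h q *v u) $ i - u $ i\<bar> \<le> K * h * supnorm u"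
begin

lemma bdd_above_Sq:
  assumes h: "h \<ge> 0"
  shows "bdd_above ((\<lambda>q. Sq f q h v $ i) ` P)"
proof (rule bdd_aboveI2)
  fix q assume q: "q \<in> P"
  then have Q: "is_Qmatrix q" using Qmatrices by blast
  have "Sq f q h v $ i \<le> (mexp h q *v v) $ i" using Sq_le_mexp_mult[OF Q] f_nonpos q by blast
  also have "\<dots> \<le> supnorm v"
    using stochastic_mult_abs_le_supnorm[OF stochastic_mexp[OF Q h], of v i] by linarith
  finally show "Sq f q h v $ i \<le> supnorm v" .
qed

lemma Eh_near:
  assumes h: "h \<ge> 0" and vw: "\<And>j. \<bar>v $ j - w $ j\<bar> \<le> c"
  shows "\<bar>Eh P f h v $ i - w $ i\<bar> \<le> K * h * supnorm w + c"
proof -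
  have near: "\<bar>(mexp h q *v w) $ i - w $ i\<bar> \<le> K * h * supnorm w" if "q \<in> P" for q
    using mexp_near that h by blast
  have "Sq f q h v $ i \<le> w $ i + K * h * supnorm w + c" if q: "q \<in> P" for q
  proof -
    have Q: "is_Qmatrix q" using Qmatrices q by blast
    have "Sq f q h v $ i \<le> (mexp h q *v v) $ i" using Sq_le_mexp_mult[OF Q] f_nonpos q by blast
    also have "\<dots> \<le> (mexp h q *v w) $ i + c"
      using stochastic_mult_dist[OF stochastic_mexp[OF Q h] vw, of i] by linarith
    also have "\<dots> \<le> w $ i + K * h * supnorm w + c"
      using near[OF q] by (simp add: abs_le_iff)
    finally show ?thesis .
  qed
  then have upper: "Eh P f h v $ i \<le> w $ i + K * h * supnorm w + c"
    unfolding Eh_def using q0 by (auto intro: cSUP_least)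
  have Q0: "is_Qmatrix q0" using Qmatrices q0 by blast
  have "w $ i - K * h * supnorm w - c \<le> (mexp h q0 *v w) $ i - c"
    using near[OF q0] by (simp add: abs_le_iff)
  also have "\<dots> \<le> (mexp h q0 *v v) $ i"
    using stochastic_mult_dist[OF stochastic_mexp[OF Q0 h] vw, of i] by linarith
  also have "\<dots> = Sq f q0 h v $ i" by (simp add: Sq_def f_q0)
  also have "\<dots> \<le> Eh P f h v $ i"
    unfolding Eh_def vec_lambda_beta by (rule cSUP_upper[OF q0 bdd_above_Sq[OF h]])
  finally show ?thesis using upper by (simp add: abs_le_iff)
qed

lemma Elist_near:
  assumes "sorted xs" and "xs \<noteq> []"
  shows "\<bar>Elist P f xs u $ i - u $ i\<bar> \<le> K * (last xs - hd xs) * supnorm u"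
  using assms
proof (induction xs arbitrary: i rule: induct_list012)
  case (3 a b rest)
  let ?c = "K * (last (b # rest) - b) * supnorm u"
  have "\<bar>Elist P f (b # rest) u $ j - u $ j\<bar> \<le> ?c" for j
    using "3.IH"(2) "3.prems"(1) by simp
  then have "\<bar>Eh P f (b - a) (Elist P f (b # rest) u) $ i - u $ i\<bar> \<le> K * (b - a) * supnorm u + ?c"
    using "3.prems"(1) by (intro Eh_near) auto
  then show ?case by (simp add: algebra_simps)
qed simp_all

lemma Epi_near:
  assumes "\<pi> \<in> partitions t"
  shows "\<bar>Epi P f \<pi> u $ i - u $ i\<bar> \<le> K * t * supnorm u"
proof -
  have fin: "finite \<pi>" and nonneg: "\<pi> \<subseteq> {0..}" and zero: "0 \<in> \<pi>" and max: "Max \<pi> = t"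
    using assms by (auto simp: partitions_def)
  show ?thesis
  proof (cases "\<pi> = {0}")
    case True
    then show ?thesis using Eh_near[of 0 u u 0 i] max by (simp add: Epi_def)
  next
    case False
    define xs where "xs = sorted_list_of_set \<pi>"
    have xs: "set xs = \<pi>" "sorted xs" "xs \<noteq> []" using fin zero by (auto simp: xs_def)
    have "last xs \<le> t" using xs fin max by (metis Max_ge last_in_set)
    moreover have "hd xs \<ge> 0" using xs nonneg by (metis atLeast_iff hd_in_set subsetD)
    ultimately have "K * (last xs - hd xs) * supnorm u \<le> K * t * supnorm u"
      using K_nonneg supnorm_nonneg[of u] by (intro mult_right_mono mult_left_mono) auto
    then show ?thesis
      using Elist_near[OF xs(2,3), of u i] False by (simp add: Epi_def xs_def)
  qed
qed

lemma Nisio_near: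
  assumes t: "t \<ge> 0"
  shows "supnorm (Nisio P f t u - u) \<le> K * t * supnorm u"
proof (rule supnorm_leI)
  fix i
  have trivial_partition: "{0, t} \<in> partitions t" using t by (auto simp: partitions_def)
  have upper: "Epi P f \<pi> u $ i \<le> u $ i + K * t * supnorm u" if "\<pi> \<in> partitions t" for \<pi>
    using Epi_near[OF that, of u i] by (simp add: abs_le_iff)
  then have "bdd_above ((\<lambda>\<pi>. Epi P f \<pi> u $ i) ` partitions t)"
    by (intro bdd_aboveI2)
  then have "Epi P f {0, t} u $ i \<le> Nisio P f t u $ i"
    unfolding Nisio_def vec_lambda_beta by (rule cSUP_upper[OF trivial_partition])
  moreover have "Nisio P f t u $ i \<le> u $ i + K * t * supnorm u"
    unfolding Nisio_def vec_lambda_beta using trivial_partition upper by (auto intro: cSUP_least)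
  ultimately show "\<bar>(Nisio P f t u - u) $ i\<bar> \<le> K * t * supnorm u"
    using Epi_near[OF trivial_partition, of u i] by (simp add: abs_le_iff)
qed

end

subsection \<open>A uniform bound on the Q-matrices\<close>

lemma Qmatrix_entry_abs_le:
  fixes q :: "real^'n^'n"
  assumes Q: "is_Qmatrix q" and b: "0 \<le> b" and off_diag: "\<And>i j. i \<noteq> j \<Longrightarrow> q $ i $ j \<le> b"
  shows "\<bar>q $ i $ j\<bar> \<le> real CARD('n) * b"
proof (cases "i = j")
  case False
  have "b \<le> real CARD('n) * b" using b by (simp add: mult_le_cancel_right1)
  then show ?thesis using Q False off_diag[OF False] by (auto simp: is_Qmatrix_def)
next
  case True
  have "(\<Sum>k\<in>UNIV. q$i$k) = q$i$i + (\<Sum>k\<in>UNIV - {i}. q$i$k)"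
    by (simp add: sum.remove)
  then have "- q$i$i = (\<Sum>k\<in>UNIV - {i}. q$i$k)" using Q by (simp add: is_Qmatrix_def)
  also have "\<dots> \<le> (\<Sum>k\<in>(UNIV::'n set). b)"
    using b off_diag by (intro order_trans[OF sum_mono sum_mono2]) auto
  finally show ?thesis using Q True by (auto simp: is_Qmatrix_def)
qed

text \<open>An off-diagonal entry q_{ij} is the i-th component of q e_j + f_q up to f_q, and both are
bounded above uniformly in q.\<close>

lemma Qmatrix_family_entries_bounded:
  fixes P :: "(real^'n^'n) set" and f :: "real^'n^'n \<Rightarrow> real^'n"
  assumes Q: "\<forall>q\<in>P. is_Qmatrix q"
    and gen_bdd: "\<forall>u i. bdd_above ((\<lambda>q. (q *v u + f q) $ i) ` P)"
    and f_bdd: "bdd_above ((\<lambda>q. supnorm (f q)) ` P)"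
  shows "\<exists>C. \<forall>q\<in>P. \<forall>i j. \<bar>q $ i $ j\<bar> \<le> C"
proof -
  obtain F where F: "\<And>q. q \<in> P \<Longrightarrow> supnorm (f q) \<le> F" using f_bdd by (auto simp: bdd_above_def)
  have "\<exists>b. \<forall>q\<in>P. q $ i $ j \<le> b" for i j
  proof -
    obtain B where B: "\<And>q. q \<in> P \<Longrightarrow> (q *v axis j 1 + f q) $ i \<le> B"
      using gen_bdd by (meson bdd_above_def imageI)
    have "q $ i $ j \<le> B + F" if "q \<in> P" for q
      using B[OF that] F[OF that] abs_le_supnorm[of "f q" i]
      by (simp add: matrix_vector_mult_basis column_def abs_le_iff)
    then show ?thesis by blast
  qed
  then obtain b where b: "\<And>i j q. q \<in> P \<Longrightarrow> q $ i $ j \<le> b i j" by metis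
  define c where "c = (\<Sum>i\<in>UNIV. \<Sum>j\<in>UNIV. \<bar>b i j\<bar>)"
  have "q $ i $ j \<le> c" if "q \<in> P" for q i j
    using b[OF that, of i j] member_le_sum[of i UNIV "\<lambda>i. \<Sum>j\<in>UNIV. \<bar>b i j\<bar>"]
      member_le_sum[of j UNIV "\<lambda>j. \<bar>b i j\<bar>"] unfolding c_def by (force intro: sum_nonneg)
  moreover have "0 \<le> c" unfolding c_def by (intro sum_nonneg) auto
  ultimately show ?thesis using Q Qmatrix_entry_abs_le by blast
qed

theorem mainTheorem13:
  fixes P :: "(real^'d^'d) set" and f :: "real^'d^'d \<Rightarrow> real^'d" and q0 :: "real^'d^'d"
  assumes Q: "\<forall>q\<in>P. is_Qmatrix q"
    and q0: "q0 \<in> P"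
    and fsup: "\<forall>q\<in>P. \<forall>i. f q $ i \<le> f q0 $ i"
    and f0: "f q0 = 0"
    and finite_gen: "\<forall>u i. bdd_above ((\<lambda>q. (q *v u + f q) $ i) ` P)"
    and fbdd: "bdd_above ((\<lambda>q. supnorm (f q)) ` P)"
  shows "\<exists>L>0. \<forall>t\<ge>0. \<forall>u0. supnorm (Nisio P f t u0 - u0) \<le> L * t * supnorm u0"
proof -
  obtain C where C: "\<forall>q\<in>P. \<forall>i j. \<bar>q $ i $ j\<bar> \<le> C"
    using Qmatrix_family_entries_bounded[OF Q finite_gen fbdd] by blast
  define L where "L = max 2 (real CARD('d) * exp (real CARD('d) * C))"
  have L_pos: "L > 0" unfolding L_def by simp
  have near: "\<forall>q\<in>P. \<forall>h\<ge>0. \<forall>u i. \<bar>(mexp h q *v u) $ i - u $ i\<bar> \<le> L * h * supnorm u"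
    using Q C mexp_mult_near unfolding L_def by blast
  have f_nonpos: "\<forall>q\<in>P. \<forall>i. f q $ i \<le> 0" using fsup f0 by simp
  show ?thesis
    using Nisio_near[OF Q q0 f_nonpos f0 less_imp_le[OF L_pos] near] L_pos by blast
qed

end
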